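(* Let $\mathbb{T}^2=\mathbb{R}^2/\mathbb{Z}^2$ with coordinates $(x,y)$, let $a>0$, and equip $\mathrm{Diff}(\mathbb{T}^2)$ with the right-invariant metric given at the identity by $\langle\!\langle u,v\rangle\!\rangle=a\int_{\mathbb{T}^2}\langle u,v\rangle\,dx\,dy$. Write $S(u,v)=\langle\!\langle R(u,v)v,u\rangle\!\rangle$. Then for any $u=f(x)\frac{\partial}{\partial x}$ and $v=g(x)\frac{\partial}{\partial x}$ with $f,g$ smooth and $1$-periodic, $$S(u,v)=a\int_{\mathbb{T}^2}(f g_x-g f_x)^2\,dx\,dy\ \ge 0 .$$ On the other hand, if $u=\sin(2\pi x)\frac{\partial}{\partial x}$ and $v=\sin^2(2\pi x)\frac{\partial}{\partial y}$, then $S(u,v)<0$.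
   Context: $R$ is the curvature tensor of the Levi-Civita connection of the right-invariant metric at the identity. *)

theory Defs
  imports "HOL-Analysis.Analysis"
begin

fun iter_dderiv :: "'a::real_normed_vector list \<Rightarrow> ('a \<Rightarrow> 'b::real_normed_vector) \<Rightarrow> 'a \<Rightarrow> 'b" where
  "iter_dderiv [] f = f"
| "iter_dderiv (h # hs) f = (\<lambda>x. frechet_derivative (iter_dderiv hs f) (at x) h)"

definition smooth :: "('a::real_normed_vector \<Rightarrow> 'b::real_normed_vector) \<Rightarrow> bool" where
  "smooth f \<longleftrightarrow> (\<forall>hs x. iter_dderiv hs f differentiable (at x))"

type_synonym vfield = "real \<times> real \<Rightarrow> real \<times> real"

(* smooth vector fields on the torus T^2 = R^2/Z^2, as Z^2-periodic smooth maps R^2 \<rightarrow> R^2 *)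
definition VF :: "vfield set" where
  "VF = {u. smooth u \<and> (\<forall>x y. u (x + 1, y) = u (x, y) \<and> u (x, y + 1) = u (x, y))}"

definition vbracket :: "vfield \<Rightarrow> vfield \<Rightarrow> vfield" where
  "vbracket u v = (\<lambda>p. frechet_derivative v (at p) (u p) - frechet_derivative u (at p) (v p))"

definition L2ip :: "real \<Rightarrow> vfield \<Rightarrow> vfield \<Rightarrow> real" where
  "L2ip a u v = a * integral (cbox (0,0) (1,1)) (\<lambda>p. inner (u p) (v p))"

definition adstar :: "real \<Rightarrow> vfield \<Rightarrow> vfield \<Rightarrow> vfield" where
  "adstar a u v = (THE w. w \<in> VF \<and> (\<forall>z\<in>VF. L2ip a w z = L2ip a v (vbracket u z)))"

definition LCconn :: "real \<Rightarrow> vfield \<Rightarrow> vfield \<Rightarrow> vfield" where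
  "LCconn a u v = (\<lambda>p. (1/2) *\<^sub>R (vbracket u v p - adstar a u v p - adstar a v u p))"

definition curv :: "real \<Rightarrow> vfield \<Rightarrow> vfield \<Rightarrow> vfield \<Rightarrow> vfield" where
  "curv a u v w = (\<lambda>p. LCconn a u (LCconn a v w) p - LCconn a v (LCconn a u w) p - LCconn a (vbracket u v) w p)"

definition sec_S :: "real \<Rightarrow> vfield \<Rightarrow> vfield \<Rightarrow> real" where
  "sec_S a u v = L2ip a (curv a u v v) u"

end

theory Submission
  imports Defs
begin

text \<open>
  For vector fields \<open>u = (p\<^sub>1(x), q\<^sub>1(x))\<close>, \<open>v = (p\<^sub>2(x), q\<^sub>2(x))\<close> depending on \<open>x\<close> only, the
  coadjoint \<open>ad*\<^sub>u v\<close> is again such a field and can be written down explicitly: integrating by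
  parts over the torus turns \<open>\<langle>\<langle>v, [u,z]\<rangle>\<rangle>\<close> into \<open>\<langle>\<langle>w, z\<rangle>\<rangle>\<close> for an explicit \<open>w\<close>, and \<open>w\<close> is the
  only such field because the \<open>L\<^sup>2\<close> pairing is nondegenerate on smooth periodic fields.
  Hence the connection, the curvature and finally \<open>S(u,v)\<close> are \<open>a\<close> times the integral over
  \<open>[0,1]\<close> of an explicit differential polynomial in \<open>p\<^sub>i, q\<^sub>i\<close>. Modulo derivatives of periodic
  functions, which integrate to zero, this density is \<open>(f g' - g f')\<^sup>2\<close> for \<open>u = (f,0)\<close>,
  \<open>v = (g,0)\<close>, and \<open>-15/4 s\<^sup>4 s'\<^sup>2\<close> for \<open>u = (s,0)\<close>, \<open>v = (0,s\<^sup>2)\<close>, \<open>s = sin 2\<pi>x\<close>.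
\<close>

section \<open>Smooth periodic functions of one variable\<close>

definition smooth1 :: "(real \<Rightarrow> real) \<Rightarrow> bool" where
  "smooth1 f \<longleftrightarrow> (\<forall>n x. (deriv ^^ n) f differentiable (at x))"

lemma smooth1_coinduct:
  assumes "S f" and step: "\<And>g. S g \<Longrightarrow> (\<forall>x. g differentiable (at x)) \<and> S (deriv g)"
  shows "smooth1 f"
proof -
  have "S ((deriv ^^ n) f)" for n
    by (induct n) (auto dest: step simp: \<open>S f\<close>)
  then show ?thesis
    unfolding smooth1_def using step by blast
qed

lemma smooth1_differentiable: "smooth1 f \<Longrightarrow> f differentiable (at x)"
  unfolding smooth1_def by (metis funpow_0)

lemma differentiable_iff_field_differentiable_real:
  "(f :: real \<Rightarrow> real) differentiable (at x) \<longleftrightarrow> f field_differentiable (at x)"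
  by (metis DERIV_deriv_iff_real_differentiable DERIV_deriv_iff_field_differentiable)

lemma smooth1_field_differentiable: "smooth1 f \<Longrightarrow> f field_differentiable (at x)"
  using smooth1_differentiable differentiable_iff_field_differentiable_real by blast

lemma smooth1_deriv [simp]: "smooth1 f \<Longrightarrow> smooth1 (deriv f)"
  unfolding smooth1_def by (metis funpow_Suc_right o_apply)

lemma smooth1_continuous_on: "smooth1 f \<Longrightarrow> continuous_on S f"
  by (meson continuous_at_imp_continuous_on differentiable_imp_continuous_within smooth1_differentiable)

lemma smooth1_const [simp]: "smooth1 (\<lambda>x. c)"
  by (rule smooth1_coinduct[where S = "\<lambda>g. \<exists>c. g = (\<lambda>x. c)"]) auto

text \<open>
  Closure of \<open>smooth1\<close> under products is not provable by a plain coinduction over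
  products, since the derivative of a product is a sum of products; the coinduction runs over
  this larger class instead.
\<close>

inductive sum_of_products :: "(real \<Rightarrow> real) \<Rightarrow> bool" where
  "smooth1 f \<Longrightarrow> sum_of_products f"
| "smooth1 f \<Longrightarrow> smooth1 g \<Longrightarrow> sum_of_products (\<lambda>x. f x * g x)"
| "sum_of_products f \<Longrightarrow> sum_of_products g \<Longrightarrow> sum_of_products (\<lambda>x. f x + g x)"
| "sum_of_products f \<Longrightarrow> sum_of_products g \<Longrightarrow> sum_of_products (\<lambda>x. f x - g x)"
| "sum_of_products f \<Longrightarrow> sum_of_products (\<lambda>x. - f x)"

lemma sum_of_products_deriv:
  "sum_of_products g \<Longrightarrow> (\<forall>x. g differentiable (at x)) \<and> sum_of_products (deriv g)"
proof (induction rule: sum_of_products.induct)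
  case (1 f)
  then show ?case by (simp add: sum_of_products.intros(1) smooth1_differentiable)
next
  case (2 f g)
  have "deriv (\<lambda>x. f x * g x) = (\<lambda>x. deriv f x * g x + f x * deriv g x)"
    using 2 by (auto simp: smooth1_field_differentiable)
  then show ?case
    using 2 by (simp add: sum_of_products.intros smooth1_differentiable)
next
  case (3 f g)
  have "deriv (\<lambda>x. f x + g x) = (\<lambda>x. deriv f x + deriv g x)"
    using 3 by (auto simp: differentiable_iff_field_differentiable_real)
  then show ?case using 3 by (simp add: sum_of_products.intros)
next
  case (4 f g)
  have "deriv (\<lambda>x. f x - g x) = (\<lambda>x. deriv f x - deriv g x)"
    using 4 by (auto simp: differentiable_iff_field_differentiable_real)
  then show ?case using 4 by (simp add: sum_of_products.intros differentiable_diff)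
next
  case (5 f)
  have "deriv (\<lambda>x. - f x) = (\<lambda>x. - deriv f x)"
    using 5 by (auto simp: differentiable_iff_field_differentiable_real)
  then show ?case using 5 by (simp add: sum_of_products.intros differentiable_minus)
qed

lemma sum_of_products_smooth1: "sum_of_products f \<Longrightarrow> smooth1 f"
  by (rule smooth1_coinduct[where S = sum_of_products]) (auto dest: sum_of_products_deriv)

lemma smooth1_mult [simp]: "smooth1 f \<Longrightarrow> smooth1 g \<Longrightarrow> smooth1 (\<lambda>x. f x * g x)"
  by (rule sum_of_products_smooth1, rule sum_of_products.intros(2))

lemma smooth1_add [simp]: "smooth1 f \<Longrightarrow> smooth1 g \<Longrightarrow> smooth1 (\<lambda>x. f x + g x)"
  by (rule sum_of_products_smooth1, rule sum_of_products.intros(3); rule sum_of_products.intros(1))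

lemma smooth1_diff [simp]: "smooth1 f \<Longrightarrow> smooth1 g \<Longrightarrow> smooth1 (\<lambda>x. f x - g x)"
  by (rule sum_of_products_smooth1, rule sum_of_products.intros(4); rule sum_of_products.intros(1))

lemma smooth1_minus [simp]: "smooth1 f \<Longrightarrow> smooth1 (\<lambda>x. - f x)"
  by (rule sum_of_products_smooth1, rule sum_of_products.intros(5), rule sum_of_products.intros(1))

lemma smooth1_divide_const [simp]:
  assumes "smooth1 f"
  shows "smooth1 (\<lambda>x. f x / c)"
proof -
  have "smooth1 (\<lambda>x. f x * inverse c)"
    using assms by (intro smooth1_mult smooth1_const)
  then show ?thesis by (simp add: divide_inverse)
qed

lemma smooth1_funpow_deriv: "smooth1 f \<Longrightarrow> smooth1 ((deriv ^^ n) f)"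
  by (induct n) auto

lemma deriv_mult_smooth1 [simp]:
  "smooth1 f \<Longrightarrow> smooth1 g \<Longrightarrow> deriv (\<lambda>x. f x * g x) = (\<lambda>x. deriv f x * g x + f x * deriv g x)"
  by (rule ext, subst deriv_mult) (auto intro: smooth1_field_differentiable)

lemma deriv_add_smooth1 [simp]:
  "smooth1 f \<Longrightarrow> smooth1 g \<Longrightarrow> deriv (\<lambda>x. f x + g x) = (\<lambda>x. deriv f x + deriv g x)"
  by (rule ext, subst deriv_add) (auto intro: smooth1_field_differentiable)

lemma deriv_diff_smooth1 [simp]:
  "smooth1 f \<Longrightarrow> smooth1 g \<Longrightarrow> deriv (\<lambda>x. f x - g x) = (\<lambda>x. deriv f x - deriv g x)"
  by (rule ext, subst deriv_diff) (auto intro: smooth1_field_differentiable)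

lemma deriv_minus_smooth1 [simp]: "smooth1 f \<Longrightarrow> deriv (\<lambda>x. - f x) = (\<lambda>x. - deriv f x)"
  by (rule ext, subst deriv_minus) (auto intro: smooth1_field_differentiable)

lemma deriv_divide_const_smooth1 [simp]: "smooth1 f \<Longrightarrow> deriv (\<lambda>x. f x / c) = (\<lambda>x. deriv f x / c)"
  by (rule ext, subst deriv_cdivide_right) (auto intro: smooth1_field_differentiable)

lemma frechet_derivative_real:
  fixes g :: "real \<Rightarrow> real"
  assumes "g differentiable (at x)"
  shows "frechet_derivative g (at x) h = h * deriv g x"
proof -
  have "(g has_derivative (*) (deriv g x)) (at x)"
    using assms by (simp add: DERIV_deriv_iff_real_differentiable[symmetric] has_field_derivative_def)
  then show ?thesis by (metis frechet_derivative_at mult.commute)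
qed

lemma smooth_imp_smooth1:
  fixes f :: "real \<Rightarrow> real"
  assumes "smooth f"
  shows "smooth1 f"
proof -
  have "iter_dderiv (replicate n 1) f = (deriv ^^ n) f" for n
  proof (induct n)
    case (Suc n)
    have "(deriv ^^ n) f differentiable (at x)" for x
      using assms Suc unfolding smooth_def by metis
    then show ?case using Suc by (simp add: frechet_derivative_real)
  qed simp
  then show ?thesis
    using assms unfolding smooth1_def smooth_def by metis
qed

definition periodic1 :: "(real \<Rightarrow> 'a) \<Rightarrow> bool" where
  "periodic1 f \<longleftrightarrow> (\<forall>x. f (x + 1) = f x)"

lemma periodic1_deriv [simp]: "periodic1 f \<Longrightarrow> periodic1 (deriv f)"
proof -
  assume "periodic1 f"
  then have "(\<lambda>t. f (t + 1)) = f" by (auto simp: periodic1_def)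
  then have "(DERIV f (x + 1) :> D) \<longleftrightarrow> (DERIV f x :> D)" for x D
    using DERIV_shift[of f D x 1] by simp
  then show ?thesis unfolding periodic1_def deriv_def by simp
qed

lemma periodic1_const [simp]: "periodic1 (\<lambda>x. c)"
  and periodic1_mult [simp]: "periodic1 f \<Longrightarrow> periodic1 g \<Longrightarrow> periodic1 (\<lambda>x. f x * g x)"
  and periodic1_add [simp]: "periodic1 f \<Longrightarrow> periodic1 g \<Longrightarrow> periodic1 (\<lambda>x. f x + g x)"
  and periodic1_diff [simp]: "periodic1 f \<Longrightarrow> periodic1 g \<Longrightarrow> periodic1 (\<lambda>x. f x - g x)"
  and periodic1_minus [simp]: "periodic1 f \<Longrightarrow> periodic1 (\<lambda>x. - f x)"
  and periodic1_divide_const [simp]: "periodic1 f \<Longrightarrow> periodic1 (\<lambda>x. f x / c)"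
  by (simp_all add: periodic1_def)

lemma periodic1_shift_int:
  assumes "periodic1 f"
  shows "f (x + of_int k) = f x"
proof -
  have nat: "f (t + of_nat n) = f t" for t n
  proof (induct n)
    case (Suc n)
    have "f (t + of_nat (Suc n)) = f ((t + of_nat n) + 1)"
      by (simp add: algebra_simps)
    with Suc assms show ?case
      unfolding periodic1_def by metis
  qed simp
  show ?thesis
  proof (cases "k \<ge> 0")
    case True
    then show ?thesis using nat[of x "nat k"] by simp
  next
    case False
    then show ?thesis using nat[of "x + of_int k" "nat (- k)"] by simp
  qed
qed

lemma integral_deriv_periodic1:
  assumes "smooth1 f" "periodic1 f"
  shows "integral {0..1} (deriv f) = 0"
proof -
  have "(f has_vector_derivative deriv f x) (at x within {0..1})" for x
    using smooth1_differentiable[OF assms(1)]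
    by (metis DERIV_deriv_iff_real_differentiable has_real_derivative_iff_has_vector_derivative
        has_vector_derivative_at_within)
  then have "(deriv f has_integral (f 1 - f 0)) {0..1}"
    by (intro fundamental_theorem_of_calculus) auto
  moreover have "f 1 = f 0"
    using assms(2) unfolding periodic1_def by (metis add_0)
  ultimately show ?thesis by (simp add: integral_unique)
qed

lemma integral_add_deriv_periodic1:
  assumes "smooth1 T" "smooth1 P" "periodic1 P" "\<And>x. G x = T x + deriv P x"
  shows "integral {0..1} G = integral {0..1} T"
proof -
  have "G = (\<lambda>x. T x + deriv P x)" using assms(4) by auto
  moreover have "T integrable_on {0..1}" "deriv P integrable_on {0..1}"
    using assms by (auto intro!: integrable_continuous_interval smooth1_continuous_on)
  ultimately show ?thesis
    using integral_deriv_periodic1[OF assms(2,3)] by (simp add: integral_add)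
qed

lemma smooth1_sin_2pi: "smooth1 (\<lambda>x. sin (2 * pi * x))"
proof (rule smooth1_coinduct[where S = "\<lambda>h. \<exists>c d. h = (\<lambda>x. c * sin (2 * pi * x) + d * cos (2 * pi * x))"])
  show "\<exists>c d. (\<lambda>x. sin (2 * pi * x)) = (\<lambda>x. c * sin (2 * pi * x) + d * cos (2 * pi * x))"
    by (intro exI[of _ 1] exI[of _ 0]) simp
next
  fix h assume "\<exists>c d. h = (\<lambda>x. c * sin (2 * pi * x) + d * cos (2 * pi * x))"
  then obtain c d where h: "h = (\<lambda>x. c * sin (2 * pi * x) + d * cos (2 * pi * x))"
    by blast
  have "(h has_real_derivative (- d * (2 * pi)) * sin (2 * pi * x) + (c * (2 * pi)) * cos (2 * pi * x)) (at x)" for x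
    unfolding h by (auto intro!: derivative_eq_intros simp: algebra_simps)
  then show "(\<forall>x. h differentiable (at x)) \<and>
      (\<exists>c d. deriv h = (\<lambda>x. c * sin (2 * pi * x) + d * cos (2 * pi * x)))"
    using DERIV_imp_deriv real_differentiable_def by blast
qed

lemma deriv_sin_2pi: "deriv (\<lambda>x. sin (2 * pi * x)) x = 2 * pi * cos (2 * pi * x)"
  by (rule DERIV_imp_deriv) (auto intro!: derivative_eq_intros)

lemma periodic1_sin_2pi: "periodic1 (\<lambda>x. sin (2 * pi * x))"
  unfolding periodic1_def by (simp add: distrib_left sin_add)

section \<open>Vector fields depending on the first coordinate only\<close>

definition xfield :: "(real \<Rightarrow> real) \<Rightarrow> (real \<Rightarrow> real) \<Rightarrow> vfield" where
  "xfield p q = (\<lambda>(x, y). (p x, q x))"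

lemma xfield_apply: "xfield p q r = (p (fst r), q (fst r))"
  by (cases r) (simp add: xfield_def)

lemma has_derivative_xfield:
  assumes "p differentiable (at (fst r))" "q differentiable (at (fst r))"
  shows "(xfield p q has_derivative (\<lambda>h. fst h *\<^sub>R (deriv p (fst r), deriv q (fst r)))) (at r)"
proof -
  have dp: "(p has_derivative (\<lambda>h. h * deriv p (fst r))) (at (fst r))"
   and dq: "(q has_derivative (\<lambda>h. h * deriv q (fst r))) (at (fst r))"
    using assms by (metis DERIV_deriv_iff_real_differentiable has_field_derivative_def mult.commute ext)+
  have "((\<lambda>r. (p (fst r), q (fst r))) has_derivative
      (\<lambda>h. (fst h * deriv p (fst r), fst h * deriv q (fst r)))) (at r)"
    by (intro has_derivative_Pair has_derivative_compose[OF has_derivative_fst[OF has_derivative_ident]]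
        dp dq [unfolded o_def])
  then show ?thesis
    by (simp add: xfield_apply[abs_def] scaleR_prod_def)
qed

lemma frechet_derivative_xfield:
  assumes "smooth1 p" "smooth1 q"
  shows "frechet_derivative (xfield p q) (at r) h = fst h *\<^sub>R (deriv p (fst r), deriv q (fst r))"
  using has_derivative_xfield[of p r q] assms smooth1_differentiable frechet_derivative_at by metis

lemma continuous_on_xfield: "smooth1 p \<Longrightarrow> smooth1 q \<Longrightarrow> continuous_on S (xfield p q)"
  unfolding xfield_def
  by (auto intro!: continuous_intros smooth1_continuous_on[THEN continuous_on_compose2[where g = p]]
      smooth1_continuous_on[THEN continuous_on_compose2[where g = q]] simp: case_prod_unfold)

lemma iter_dderiv_xfield:
  assumes "smooth1 p" "smooth1 q"
  shows "iter_dderiv hs (xfield p q) =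
    (\<lambda>r. (\<Prod>h\<leftarrow>hs. fst h) *\<^sub>R xfield ((deriv ^^ length hs) p) ((deriv ^^ length hs) q) r)"
proof (induct hs)
  case (Cons h hs)
  let ?c = "\<Prod>h\<leftarrow>hs. fst h"
  let ?p = "(deriv ^^ length hs) p" and ?q = "(deriv ^^ length hs) q"
  have "((\<lambda>r. ?c *\<^sub>R xfield ?p ?q r) has_derivative
      (\<lambda>k. ?c *\<^sub>R (fst k *\<^sub>R (deriv ?p (fst r), deriv ?q (fst r))))) (at r)" for r
    using assms
    by (intro has_derivative_scaleR_right has_derivative_xfield smooth1_differentiable smooth1_funpow_deriv)
  then have "frechet_derivative (\<lambda>r. ?c *\<^sub>R xfield ?p ?q r) (at r) h =
      ?c *\<^sub>R (fst h *\<^sub>R (deriv ?p (fst r), deriv ?q (fst r)))" for r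
    by (metis frechet_derivative_at)
  then show ?case using Cons by (auto simp: xfield_apply mult.commute)
qed simp

lemma differentiable_xfield: "smooth1 p \<Longrightarrow> smooth1 q \<Longrightarrow> xfield p q differentiable (at r)"
  by (meson differentiableI has_derivative_xfield smooth1_differentiable)

lemma smooth_xfield:
  assumes "smooth1 p" "smooth1 q"
  shows "smooth (xfield p q)"
  unfolding smooth_def iter_dderiv_xfield[OF assms]
  using assms by (intro allI differentiable_scaleR differentiable_const differentiable_xfield smooth1_funpow_deriv)

lemma xfield_in_VF:
  "smooth1 p \<Longrightarrow> smooth1 q \<Longrightarrow> periodic1 p \<Longrightarrow> periodic1 q \<Longrightarrow> xfield p q \<in> VF"
  using smooth_xfield[of p q] unfolding VF_def by (auto simp: xfield_def periodic1_def)

definition bracket_x :: "(real \<Rightarrow> real) \<Rightarrow> (real \<Rightarrow> real) \<Rightarrow> (real \<Rightarrow> real) \<Rightarrow> (real \<Rightarrow> real) \<Rightarrow> real \<Rightarrow> real" where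
  "bracket_x p\<^sub>1 q\<^sub>1 p\<^sub>2 q\<^sub>2 = (\<lambda>x. p\<^sub>1 x * deriv p\<^sub>2 x - p\<^sub>2 x * deriv p\<^sub>1 x)"

definition bracket_y :: "(real \<Rightarrow> real) \<Rightarrow> (real \<Rightarrow> real) \<Rightarrow> (real \<Rightarrow> real) \<Rightarrow> (real \<Rightarrow> real) \<Rightarrow> real \<Rightarrow> real" where
  "bracket_y p\<^sub>1 q\<^sub>1 p\<^sub>2 q\<^sub>2 = (\<lambda>x. p\<^sub>1 x * deriv q\<^sub>2 x - p\<^sub>2 x * deriv q\<^sub>1 x)"

lemma vbracket_xfield:
  assumes "smooth1 p\<^sub>1" "smooth1 q\<^sub>1" "smooth1 p\<^sub>2" "smooth1 q\<^sub>2"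
  shows "vbracket (xfield p\<^sub>1 q\<^sub>1) (xfield p\<^sub>2 q\<^sub>2) =
    xfield (bracket_x p\<^sub>1 q\<^sub>1 p\<^sub>2 q\<^sub>2) (bracket_y p\<^sub>1 q\<^sub>1 p\<^sub>2 q\<^sub>2)"
  unfolding vbracket_def frechet_derivative_xfield[OF assms(1,2)] frechet_derivative_xfield[OF assms(3,4)]
  by (simp add: fun_eq_iff xfield_apply bracket_x_def bracket_y_def algebra_simps)

lemma smooth_diff:
  fixes f g :: "'a::real_normed_vector \<Rightarrow> 'b::real_normed_vector"
  assumes "smooth f" "smooth g"
  shows "smooth (\<lambda>r. f r - g r)"
proof -
  have "iter_dderiv hs (\<lambda>r. f r - g r) = (\<lambda>r. iter_dderiv hs f r - iter_dderiv hs g r)" for hs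
  proof (induct hs)
    case (Cons h hs)
    let ?D = "\<lambda>f x k. frechet_derivative (iter_dderiv hs f) (at x) k"
    have "((\<lambda>r. iter_dderiv hs f r - iter_dderiv hs g r) has_derivative (\<lambda>k. ?D f x k - ?D g x k)) (at x)" for x
      using assms unfolding smooth_def
      by (intro has_derivative_diff frechet_derivative_works[THEN iffD1]) auto
    then have "frechet_derivative (\<lambda>r. iter_dderiv hs f r - iter_dderiv hs g r) (at x) =
        (\<lambda>k. ?D f x k - ?D g x k)" for x
      by (metis frechet_derivative_at)
    then show ?case using Cons by simp
  qed simp
  then show ?thesis
    using assms unfolding smooth_def by (auto intro: differentiable_diff)
qed

lemma VF_diff: "u \<in> VF \<Longrightarrow> v \<in> VF \<Longrightarrow> (\<lambda>r. u r - v r) \<in> VF"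
  unfolding VF_def by (auto intro: smooth_diff)

lemma VF_differentiable: "z \<in> VF \<Longrightarrow> z differentiable (at r)"
proof -
  assume "z \<in> VF"
  then have "iter_dderiv [] z differentiable (at r)"
    unfolding VF_def smooth_def by blast
  then show ?thesis by simp
qed

lemma VF_continuous_on: "z \<in> VF \<Longrightarrow> continuous_on S z"
  by (simp add: continuous_at_imp_continuous_on differentiable_imp_continuous_within VF_differentiable)

lemma VF_continuous_on_frechet_derivative:
  assumes "z \<in> VF"
  shows "continuous_on S (\<lambda>r. frechet_derivative z (at r) e)"
proof -
  have "iter_dderiv [e] z differentiable (at r)" for r
    using assms unfolding VF_def smooth_def by blast
  then show ?thesis
    by (simp add: continuous_at_imp_continuous_on differentiable_imp_continuous_within)
qed

lemma frechet_derivative_VF_Pair: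
  assumes "z \<in> VF"
  shows "frechet_derivative z (at r) (a, b) =
    a *\<^sub>R frechet_derivative z (at r) (1, 0) + b *\<^sub>R frechet_derivative z (at r) (0, 1)"
proof -
  have "linear (frechet_derivative z (at r))"
    using assms VF_differentiable frechet_derivative_works has_derivative_bounded_linear
      bounded_linear.linear by blast
  then have "frechet_derivative z (at r) (a *\<^sub>R (1, 0) + b *\<^sub>R (0, 1)) =
      a *\<^sub>R frechet_derivative z (at r) (1, 0) + b *\<^sub>R frechet_derivative z (at r) (0, 1)"
    by (simp only: linear_add linear_scale)
  moreover have "a *\<^sub>R (1, 0) + b *\<^sub>R (0, 1) = (a, b)"
    by simp
  ultimately show ?thesis by simp
qed

lemma VF_eq_0_if_eq_0_on_unit_square:
  assumes "d \<in> VF" and "\<And>r. r \<in> cbox (0, 0) (1, 1) \<Longrightarrow> d r = 0"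
  shows "d r = 0"
proof (cases r)
  case (Pair x y)
  let ?x = "x - of_int \<lfloor>x\<rfloor>" and ?y = "y - of_int \<lfloor>y\<rfloor>"
  have "periodic1 (\<lambda>x. d (x, y))" "periodic1 (\<lambda>y. d (?x, y))"
    using assms(1) by (simp_all add: VF_def periodic1_def)
  then have "d (x, y) = d (?x, ?y)"
    using periodic1_shift_int[of "\<lambda>x. d (x, y)" ?x "\<lfloor>x\<rfloor>"] periodic1_shift_int[of "\<lambda>y. d (?x, y)" ?y "\<lfloor>y\<rfloor>"]
    by simp
  also have "\<dots> = 0"
  proof (rule assms(2))
    show "(?x, ?y) \<in> cbox (0, 0) (1, 1)"
      using floor_correct[of x] floor_correct[of y] by simp linarith
  qed
  finally show ?thesis using Pair by simp
qed

section \<open>Integration over the unit square\<close>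

lemma integral_directional_derivative_periodic:
  fixes \<Phi> :: "'a::real_normed_vector \<Rightarrow> real"
  assumes "\<And>r. (\<Phi> has_derivative \<Phi>' r) (at r)" and "\<Phi> (r + e) = \<Phi> r"
  shows "integral {0..1} (\<lambda>t. \<Phi>' (r + t *\<^sub>R e) e) = 0"
proof -
  have "((\<lambda>t. \<Phi> (r + t *\<^sub>R e)) has_vector_derivative \<Phi>' (r + t *\<^sub>R e) e) (at t within {0..1})" for t
  proof -
    have "((\<lambda>t. r + t *\<^sub>R e) has_derivative (\<lambda>h. h *\<^sub>R e)) (at t)"
      using has_derivative_add[OF has_derivative_const[of r] has_derivative_scaleR_left[OF has_derivative_ident, of e]]
      by simp
    from has_derivative_compose[OF this assms(1)]
    have "((\<lambda>t. \<Phi> (r + t *\<^sub>R e)) has_derivative (\<lambda>h. \<Phi>' (r + t *\<^sub>R e) (h *\<^sub>R e))) (at t)"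
      unfolding o_def .
    moreover have "linear (\<Phi>' (r + t *\<^sub>R e))"
      using assms(1) has_derivative_linear by blast
    ultimately have "((\<lambda>t. \<Phi> (r + t *\<^sub>R e)) has_derivative (\<lambda>h. h *\<^sub>R \<Phi>' (r + t *\<^sub>R e) e)) (at t)"
      by (simp only: linear_scale)
    then show ?thesis
      unfolding has_vector_derivative_def by (rule has_derivative_at_withinI)
  qed
  then have "((\<lambda>t. \<Phi>' (r + t *\<^sub>R e) e) has_integral (\<Phi> (r + 1 *\<^sub>R e) - \<Phi> (r + 0 *\<^sub>R e))) {0..1}"
    by (intro fundamental_theorem_of_calculus) auto
  then show ?thesis
    using assms(2) by (simp add: integral_unique)
qed

lemma integral_partial_x_periodic:
  fixes \<Phi> :: "real \<times> real \<Rightarrow> real"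
  assumes d: "\<And>r. (\<Phi> has_derivative \<Phi>' r) (at r)"
    and c: "continuous_on UNIV (\<lambda>r. \<Phi>' r (1, 0))"
    and p: "\<And>x y. \<Phi> (x + 1, y) = \<Phi> (x, y)"
  shows "integral (cbox (0, 0) (1, 1)) (\<lambda>r. \<Phi>' r (1, 0)) = 0"
proof -
  have "continuous_on (cbox (0, 0) (1, 1)) (\<lambda>(x, y). \<Phi>' (x, y) (1, 0))"
    using continuous_on_subset[OF c] by (auto simp: case_prod_unfold)
  from integral_swap_continuous[where f = "\<lambda>x y. \<Phi>' (x, y) (1, 0)", OF this]
  have "integral (cbox (0, 0) (1, 1)) (\<lambda>r. \<Phi>' r (1, 0)) =
      integral (cbox 0 1) (\<lambda>y. integral (cbox 0 1) (\<lambda>x. \<Phi>' (x, y) (1, 0)))"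
    using integral_prod_continuous[OF continuous_on_subset[OF c]] by auto
  also have "\<dots> = 0"
  proof -
    have "integral {0..1} (\<lambda>x. \<Phi>' (x, y) (1, 0)) = 0" for y
      using integral_directional_derivative_periodic[OF d, of "(0, y)" "(1, 0)"] p[of 0 y] by simp
    then show ?thesis by simp
  qed
  finally show ?thesis .
qed

lemma integral_partial_y_periodic:
  fixes \<Phi> :: "real \<times> real \<Rightarrow> real"
  assumes d: "\<And>r. (\<Phi> has_derivative \<Phi>' r) (at r)"
    and c: "continuous_on UNIV (\<lambda>r. \<Phi>' r (0, 1))"
    and p: "\<And>x y. \<Phi> (x, y + 1) = \<Phi> (x, y)"
  shows "integral (cbox (0, 0) (1, 1)) (\<lambda>r. \<Phi>' r (0, 1)) = 0"
proof -
  have "integral (cbox (0, 0) (1, 1)) (\<lambda>r. \<Phi>' r (0, 1)) =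
      integral (cbox 0 1) (\<lambda>x. integral (cbox 0 1) (\<lambda>y. \<Phi>' (x, y) (0, 1)))"
    using integral_prod_continuous[OF continuous_on_subset[OF c]] by auto
  also have "\<dots> = 0"
  proof -
    have "integral {0..1} (\<lambda>y. \<Phi>' (x, y) (0, 1)) = 0" for x
      using integral_directional_derivative_periodic[OF d, of "(x, 0)" "(0, 1)"] p[of x 0] by simp
    then show ?thesis by simp
  qed
  finally show ?thesis .
qed

lemma integral_unit_square_fst:
  fixes G :: "real \<Rightarrow> real"
  assumes "continuous_on UNIV G"
  shows "integral (cbox (0, 0) (1, 1)) (\<lambda>r :: real \<times> real. G (fst r)) = integral {0..1} G"
proof -
  have "continuous_on UNIV (\<lambda>r :: real \<times> real. G (fst r))"
    by (intro continuous_on_compose2[OF assms] continuous_intros) auto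
  then have "continuous_on (cbox (0, 0) (1, 1)) (\<lambda>r :: real \<times> real. G (fst r))"
    by (rule continuous_on_subset) auto
  from integral_prod_continuous[OF this] show ?thesis
    by simp
qed

lemma integral_pos_if_continuous_nonneg:
  fixes f :: "real \<Rightarrow> real"
  assumes "continuous_on {a..b} f" "\<And>x. x \<in> {a..b} \<Longrightarrow> f x \<ge> 0" "c \<in> {a..b}" "f c \<noteq> 0" "a < b"
  shows "integral {a..b} f > 0"
proof (rule ccontr)
  have "integral {a..b} f \<ge> 0"
    using assms(1,2) by (intro integral_nonneg integrable_continuous_interval) auto
  moreover assume "\<not> integral {a..b} f > 0"
  ultimately have "(f has_integral 0) (cbox a b)"
    using integrable_continuous_interval[OF assms(1)] by (simp add: has_integral_integral)
  then have "f c = 0"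
    using assms by (intro has_integral_0_cbox_imp_0[of a b f]) auto
  with assms(4) show False ..
qed

lemma has_derivative_inner_xfield:
  assumes "smooth1 p" "smooth1 q" "z \<in> VF"
  shows "((\<lambda>r. inner (xfield p q r) (z r)) has_derivative
     (\<lambda>h. inner (xfield p q r) (frechet_derivative z (at r) h)
        + inner (fst h *\<^sub>R (deriv p (fst r), deriv q (fst r))) (z r))) (at r)"
  using assms
  by (intro has_derivative_inner has_derivative_xfield smooth1_differentiable
      frechet_derivative_works[THEN iffD1] VF_differentiable)

lemma integral_by_parts_x:
  assumes "smooth1 p" "smooth1 q" "periodic1 p" "periodic1 q" "z \<in> VF"
  shows "integral (cbox (0, 0) (1, 1)) (\<lambda>r. inner (xfield p q r) (frechet_derivative z (at r) (1, 0))
    + inner (xfield (deriv p) (deriv q) r) (z r)) = 0"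
proof -
  have "continuous_on UNIV (\<lambda>r. inner (xfield p q r) (frechet_derivative z (at r) (1, 0))
      + inner (xfield (deriv p) (deriv q) r) (z r))"
    using assms
    by (intro continuous_intros continuous_on_xfield VF_continuous_on VF_continuous_on_frechet_derivative)
      simp_all
  moreover have "inner (xfield p q (x + 1, y)) (z (x + 1, y)) = inner (xfield p q (x, y)) (z (x, y))" for x y
    using assms by (simp add: xfield_apply periodic1_def VF_def)
  ultimately show ?thesis
    using integral_partial_x_periodic[OF has_derivative_inner_xfield[OF assms(1,2,5)]]
    by (simp add: xfield_apply)
qed

lemma integral_by_parts_y:
  assumes "smooth1 p" "smooth1 q" "z \<in> VF"
  shows "integral (cbox (0, 0) (1, 1)) (\<lambda>r. inner (xfield p q r) (frechet_derivative z (at r) (0, 1))) = 0"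
proof -
  have "continuous_on UNIV (\<lambda>r. inner (xfield p q r) (frechet_derivative z (at r) (0, 1)))"
    using assms by (intro continuous_intros continuous_on_xfield VF_continuous_on_frechet_derivative)
  moreover have "inner (xfield p q (x, y + 1)) (z (x, y + 1)) = inner (xfield p q (x, y)) (z (x, y))" for x y
    using assms by (simp add: xfield_apply VF_def)
  ultimately show ?thesis
    using integral_partial_y_periodic[OF has_derivative_inner_xfield[OF assms]]
    by (simp add: zero_prod_def[symmetric])
qed

lemma VF_eq_if_L2ip_eq:
  assumes "a \<noteq> 0" "w\<^sub>1 \<in> VF" "w\<^sub>2 \<in> VF"
    and "\<forall>z\<in>VF. L2ip a w\<^sub>1 z = L2ip a w\<^sub>2 z"
  shows "w\<^sub>1 = w\<^sub>2"
proof -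
  let ?d = "\<lambda>r. w\<^sub>1 r - w\<^sub>2 r" and ?Q = "cbox (0 :: real, 0 :: real) (1, 1)"
  have "?d \<in> VF" using VF_diff assms by blast
  have integrable: "(\<lambda>r. inner (w r) (?d r)) integrable_on ?Q" if "w \<in> VF" for w
    by (intro integrable_continuous continuous_intros VF_continuous_on that \<open>?d \<in> VF\<close>)
  have "L2ip a w\<^sub>1 ?d = L2ip a w\<^sub>2 ?d"
    using assms \<open>?d \<in> VF\<close> by blast
  then have "integral ?Q (\<lambda>r. inner (w\<^sub>1 r) (?d r)) - integral ?Q (\<lambda>r. inner (w\<^sub>2 r) (?d r)) = 0"
    using assms(1) by (simp add: L2ip_def)
  then have "integral ?Q (\<lambda>r. inner (w\<^sub>1 r) (?d r) - inner (w\<^sub>2 r) (?d r)) = 0"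
    using integral_diff[OF integrable[OF assms(2)] integrable[OF assms(3)]] by simp
  then have "integral ?Q (\<lambda>r. inner (?d r) (?d r)) = 0"
    by (simp add: inner_diff_left)
  moreover have cont: "continuous_on ?Q (\<lambda>r. inner (?d r) (?d r))"
    by (intro continuous_intros VF_continuous_on \<open>?d \<in> VF\<close>)
  ultimately have integral_0: "((\<lambda>r. inner (?d r) (?d r)) has_integral 0) ?Q"
    using integrable_integral[OF integrable_continuous[OF cont]] by simp
  have "(1/2, 1/2) \<in> box (0 :: real, 0 :: real) (1, 1)"
    by (simp add: mem_box Basis_prod_def)
  then have nonempty: "box (0 :: real, 0 :: real) (1, 1) \<noteq> {}"
    by blast
  have "?d r = 0" if "r \<in> ?Q" for r
  proof -
    have "inner (?d r) (?d r) = 0"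
      by (rule has_integral_0_cbox_imp_0[OF cont _ integral_0 nonempty that]) simp
    then show ?thesis by simp
  qed
  then have "?d r = 0" for r
    by (rule VF_eq_0_if_eq_0_on_unit_square[OF \<open>?d \<in> VF\<close>])
  then show ?thesis by auto
qed

section \<open>Coadjoint operator, connection and curvature on fields depending on \<open>x\<close>\<close>

definition coadjoint_x :: "(real \<Rightarrow> real) \<Rightarrow> (real \<Rightarrow> real) \<Rightarrow> (real \<Rightarrow> real) \<Rightarrow> (real \<Rightarrow> real) \<Rightarrow> real \<Rightarrow> real" where
  "coadjoint_x p\<^sub>1 q\<^sub>1 p\<^sub>2 q\<^sub>2 = (\<lambda>x. - (p\<^sub>1 x * deriv p\<^sub>2 x + 2 * deriv p\<^sub>1 x * p\<^sub>2 x + deriv q\<^sub>1 x * q\<^sub>2 x))"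

definition coadjoint_y :: "(real \<Rightarrow> real) \<Rightarrow> (real \<Rightarrow> real) \<Rightarrow> (real \<Rightarrow> real) \<Rightarrow> (real \<Rightarrow> real) \<Rightarrow> real \<Rightarrow> real" where
  "coadjoint_y p\<^sub>1 q\<^sub>1 p\<^sub>2 q\<^sub>2 = (\<lambda>x. - (p\<^sub>1 x * deriv q\<^sub>2 x + deriv p\<^sub>1 x * q\<^sub>2 x))"

definition conn_x :: "(real \<Rightarrow> real) \<Rightarrow> (real \<Rightarrow> real) \<Rightarrow> (real \<Rightarrow> real) \<Rightarrow> (real \<Rightarrow> real) \<Rightarrow> real \<Rightarrow> real" where
  "conn_x p\<^sub>1 q\<^sub>1 p\<^sub>2 q\<^sub>2 =
    (\<lambda>x. 2 * p\<^sub>1 x * deriv p\<^sub>2 x + deriv p\<^sub>1 x * p\<^sub>2 x + (deriv q\<^sub>1 x * q\<^sub>2 x + q\<^sub>1 x * deriv q\<^sub>2 x) / 2)"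

definition conn_y :: "(real \<Rightarrow> real) \<Rightarrow> (real \<Rightarrow> real) \<Rightarrow> (real \<Rightarrow> real) \<Rightarrow> (real \<Rightarrow> real) \<Rightarrow> real \<Rightarrow> real" where
  "conn_y p\<^sub>1 q\<^sub>1 p\<^sub>2 q\<^sub>2 = (\<lambda>x. p\<^sub>1 x * deriv q\<^sub>2 x + (deriv p\<^sub>1 x * q\<^sub>2 x + deriv p\<^sub>2 x * q\<^sub>1 x) / 2)"

definition curv_x :: "(real \<Rightarrow> real) \<Rightarrow> (real \<Rightarrow> real) \<Rightarrow> (real \<Rightarrow> real) \<Rightarrow> (real \<Rightarrow> real) \<Rightarrow> real \<Rightarrow> real" where
  "curv_x p\<^sub>1 q\<^sub>1 p\<^sub>2 q\<^sub>2 = (\<lambda>x.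
      conn_x p\<^sub>1 q\<^sub>1 (conn_x p\<^sub>2 q\<^sub>2 p\<^sub>2 q\<^sub>2) (conn_y p\<^sub>2 q\<^sub>2 p\<^sub>2 q\<^sub>2) x
    - conn_x p\<^sub>2 q\<^sub>2 (conn_x p\<^sub>1 q\<^sub>1 p\<^sub>2 q\<^sub>2) (conn_y p\<^sub>1 q\<^sub>1 p\<^sub>2 q\<^sub>2) x
    - conn_x (bracket_x p\<^sub>1 q\<^sub>1 p\<^sub>2 q\<^sub>2) (bracket_y p\<^sub>1 q\<^sub>1 p\<^sub>2 q\<^sub>2) p\<^sub>2 q\<^sub>2 x)"

definition curv_y :: "(real \<Rightarrow> real) \<Rightarrow> (real \<Rightarrow> real) \<Rightarrow> (real \<Rightarrow> real) \<Rightarrow> (real \<Rightarrow> real) \<Rightarrow> real \<Rightarrow> real" where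
  "curv_y p\<^sub>1 q\<^sub>1 p\<^sub>2 q\<^sub>2 = (\<lambda>x.
      conn_y p\<^sub>1 q\<^sub>1 (conn_x p\<^sub>2 q\<^sub>2 p\<^sub>2 q\<^sub>2) (conn_y p\<^sub>2 q\<^sub>2 p\<^sub>2 q\<^sub>2) x
    - conn_y p\<^sub>2 q\<^sub>2 (conn_x p\<^sub>1 q\<^sub>1 p\<^sub>2 q\<^sub>2) (conn_y p\<^sub>1 q\<^sub>1 p\<^sub>2 q\<^sub>2) x
    - conn_y (bracket_x p\<^sub>1 q\<^sub>1 p\<^sub>2 q\<^sub>2) (bracket_y p\<^sub>1 q\<^sub>1 p\<^sub>2 q\<^sub>2) p\<^sub>2 q\<^sub>2 x)"

lemmas component_defs = bracket_x_def bracket_y_def coadjoint_x_def coadjoint_y_def conn_x_def conn_y_def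

lemma smooth1_components [simp]:
  assumes "smooth1 p\<^sub>1" "smooth1 q\<^sub>1" "smooth1 p\<^sub>2" "smooth1 q\<^sub>2"
  shows "smooth1 (bracket_x p\<^sub>1 q\<^sub>1 p\<^sub>2 q\<^sub>2)" "smooth1 (bracket_y p\<^sub>1 q\<^sub>1 p\<^sub>2 q\<^sub>2)"
    "smooth1 (coadjoint_x p\<^sub>1 q\<^sub>1 p\<^sub>2 q\<^sub>2)" "smooth1 (coadjoint_y p\<^sub>1 q\<^sub>1 p\<^sub>2 q\<^sub>2)"
    "smooth1 (conn_x p\<^sub>1 q\<^sub>1 p\<^sub>2 q\<^sub>2)" "smooth1 (conn_y p\<^sub>1 q\<^sub>1 p\<^sub>2 q\<^sub>2)"
  unfolding component_defs
  by (intro smooth1_add smooth1_diff smooth1_mult smooth1_minus smooth1_divide_const smooth1_const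
      smooth1_deriv assms)+

lemma periodic1_components [simp]:
  assumes "periodic1 p\<^sub>1" "periodic1 q\<^sub>1" "periodic1 p\<^sub>2" "periodic1 q\<^sub>2"
  shows "periodic1 (bracket_x p\<^sub>1 q\<^sub>1 p\<^sub>2 q\<^sub>2)" "periodic1 (bracket_y p\<^sub>1 q\<^sub>1 p\<^sub>2 q\<^sub>2)"
    "periodic1 (coadjoint_x p\<^sub>1 q\<^sub>1 p\<^sub>2 q\<^sub>2)" "periodic1 (coadjoint_y p\<^sub>1 q\<^sub>1 p\<^sub>2 q\<^sub>2)"
    "periodic1 (conn_x p\<^sub>1 q\<^sub>1 p\<^sub>2 q\<^sub>2)" "periodic1 (conn_y p\<^sub>1 q\<^sub>1 p\<^sub>2 q\<^sub>2)"
  unfolding component_defs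
  by (intro periodic1_add periodic1_diff periodic1_mult periodic1_minus periodic1_divide_const
      periodic1_const periodic1_deriv assms)+

lemma smooth1_curv [simp]:
  assumes "smooth1 p\<^sub>1" "smooth1 q\<^sub>1" "smooth1 p\<^sub>2" "smooth1 q\<^sub>2"
  shows "smooth1 (curv_x p\<^sub>1 q\<^sub>1 p\<^sub>2 q\<^sub>2)" "smooth1 (curv_y p\<^sub>1 q\<^sub>1 p\<^sub>2 q\<^sub>2)"
  unfolding curv_x_def curv_y_def
  by (intro smooth1_diff smooth1_components assms)+

text \<open>
  Pointwise form of the integration by parts behind \<open>ad*\<close>: the first two summands are
  derivatives of periodic functions in \<open>x\<close> resp. \<open>y\<close>.
\<close>

lemma inner_vbracket_xfield:
  assumes "smooth1 p\<^sub>1" "smooth1 q\<^sub>1" "smooth1 p\<^sub>2" "smooth1 q\<^sub>2" "z \<in> VF"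
  shows "inner (xfield p\<^sub>2 q\<^sub>2 r) (vbracket (xfield p\<^sub>1 q\<^sub>1) z r) =
      (inner (xfield (\<lambda>x. p\<^sub>1 x * p\<^sub>2 x) (\<lambda>x. p\<^sub>1 x * q\<^sub>2 x) r) (frechet_derivative z (at r) (1, 0))
       + inner (xfield (deriv (\<lambda>x. p\<^sub>1 x * p\<^sub>2 x)) (deriv (\<lambda>x. p\<^sub>1 x * q\<^sub>2 x)) r) (z r))
    + inner (xfield (\<lambda>x. q\<^sub>1 x * p\<^sub>2 x) (\<lambda>x. q\<^sub>1 x * q\<^sub>2 x) r) (frechet_derivative z (at r) (0, 1))
    + inner (xfield (coadjoint_x p\<^sub>1 q\<^sub>1 p\<^sub>2 q\<^sub>2) (coadjoint_y p\<^sub>1 q\<^sub>1 p\<^sub>2 q\<^sub>2) r) (z r)"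
proof -
  obtain z\<^sub>1 z\<^sub>2 where z: "z r = (z\<^sub>1, z\<^sub>2)"
    by fastforce
  obtain a\<^sub>1 a\<^sub>2 where dx: "frechet_derivative z (at r) (1, 0) = (a\<^sub>1, a\<^sub>2)"
    by fastforce
  obtain b\<^sub>1 b\<^sub>2 where dy: "frechet_derivative z (at r) (0, 1) = (b\<^sub>1, b\<^sub>2)"
    by fastforce
  have "vbracket (xfield p\<^sub>1 q\<^sub>1) z r =
      p\<^sub>1 (fst r) *\<^sub>R (a\<^sub>1, a\<^sub>2) + q\<^sub>1 (fst r) *\<^sub>R (b\<^sub>1, b\<^sub>2) - z\<^sub>1 *\<^sub>R (deriv p\<^sub>1 (fst r), deriv q\<^sub>1 (fst r))"
    unfolding vbracket_def frechet_derivative_xfield[OF assms(1,2)] xfield_apply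
      frechet_derivative_VF_Pair[OF assms(5), of r "p\<^sub>1 (fst r)" "q\<^sub>1 (fst r)"] dx dy z
    by simp
  then show ?thesis
    using assms(1-4) by (simp add: xfield_apply z dx dy coadjoint_x_def coadjoint_y_def algebra_simps)
qed

lemma adstar_xfield:
  assumes "a \<noteq> 0"
    and smooth: "smooth1 p\<^sub>1" "smooth1 q\<^sub>1" "smooth1 p\<^sub>2" "smooth1 q\<^sub>2"
    and periodic: "periodic1 p\<^sub>1" "periodic1 q\<^sub>1" "periodic1 p\<^sub>2" "periodic1 q\<^sub>2"
  shows "adstar a (xfield p\<^sub>1 q\<^sub>1) (xfield p\<^sub>2 q\<^sub>2) =
    xfield (coadjoint_x p\<^sub>1 q\<^sub>1 p\<^sub>2 q\<^sub>2) (coadjoint_y p\<^sub>1 q\<^sub>1 p\<^sub>2 q\<^sub>2)" (is "_ = ?w")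
proof -
  have "?w \<in> VF"
    using smooth periodic by (intro xfield_in_VF) simp_all
  moreover have "L2ip a ?w z = L2ip a (xfield p\<^sub>2 q\<^sub>2) (vbracket (xfield p\<^sub>1 q\<^sub>1) z)" if "z \<in> VF" for z
  proof -
    let ?Q = "cbox (0 :: real, 0 :: real) (1, 1)"
    let ?A = "\<lambda>r. inner (xfield (\<lambda>x. p\<^sub>1 x * p\<^sub>2 x) (\<lambda>x. p\<^sub>1 x * q\<^sub>2 x) r) (frechet_derivative z (at r) (1, 0))
       + inner (xfield (deriv (\<lambda>x. p\<^sub>1 x * p\<^sub>2 x)) (deriv (\<lambda>x. p\<^sub>1 x * q\<^sub>2 x)) r) (z r)"
    let ?B = "\<lambda>r. inner (xfield (\<lambda>x. q\<^sub>1 x * p\<^sub>2 x) (\<lambda>x. q\<^sub>1 x * q\<^sub>2 x) r) (frechet_derivative z (at r) (0, 1))"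
    let ?C = "\<lambda>r. inner (?w r) (z r)"
    have integrable: "?A integrable_on ?Q" "?B integrable_on ?Q" "?C integrable_on ?Q"
      using smooth \<open>z \<in> VF\<close>
      by (intro integrable_continuous continuous_intros continuous_on_xfield VF_continuous_on
          VF_continuous_on_frechet_derivative; simp)+
    have "integral ?Q ?A = 0" "integral ?Q ?B = 0"
      using smooth periodic \<open>z \<in> VF\<close> by (intro integral_by_parts_x integral_by_parts_y; simp)+
    then have "integral ?Q (\<lambda>r. ?A r + ?B r + ?C r) = integral ?Q ?C"
      using integral_add[OF integrable_add[OF integrable(1,2)] integrable(3)]
        integral_add[OF integrable(1,2)] by simp
    then show ?thesis
      unfolding L2ip_def inner_vbracket_xfield[OF smooth \<open>z \<in> VF\<close>] by simp
  qed
  ultimately show ?thesis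
    unfolding adstar_def using VF_eq_if_L2ip_eq[OF \<open>a \<noteq> 0\<close>] by (intro the_equality) auto
qed

lemma LCconn_xfield:
  assumes "a \<noteq> 0"
    and smooth: "smooth1 p\<^sub>1" "smooth1 q\<^sub>1" "smooth1 p\<^sub>2" "smooth1 q\<^sub>2"
    and periodic: "periodic1 p\<^sub>1" "periodic1 q\<^sub>1" "periodic1 p\<^sub>2" "periodic1 q\<^sub>2"
  shows "LCconn a (xfield p\<^sub>1 q\<^sub>1) (xfield p\<^sub>2 q\<^sub>2) = xfield (conn_x p\<^sub>1 q\<^sub>1 p\<^sub>2 q\<^sub>2) (conn_y p\<^sub>1 q\<^sub>1 p\<^sub>2 q\<^sub>2)"
  unfolding LCconn_def vbracket_xfield[OF smooth] adstar_xfield[OF assms]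
    adstar_xfield[OF \<open>a \<noteq> 0\<close> smooth(3,4,1,2) periodic(3,4,1,2)]
  by (auto simp: fun_eq_iff xfield_apply component_defs field_simps)

lemma curv_xfield:
  assumes "a \<noteq> 0"
    and smooth: "smooth1 p\<^sub>1" "smooth1 q\<^sub>1" "smooth1 p\<^sub>2" "smooth1 q\<^sub>2"
    and periodic: "periodic1 p\<^sub>1" "periodic1 q\<^sub>1" "periodic1 p\<^sub>2" "periodic1 q\<^sub>2"
  shows "curv a (xfield p\<^sub>1 q\<^sub>1) (xfield p\<^sub>2 q\<^sub>2) (xfield p\<^sub>2 q\<^sub>2) =
    xfield (curv_x p\<^sub>1 q\<^sub>1 p\<^sub>2 q\<^sub>2) (curv_y p\<^sub>1 q\<^sub>1 p\<^sub>2 q\<^sub>2)"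
  using smooth periodic
  by (simp add: curv_def vbracket_xfield LCconn_xfield[OF \<open>a \<noteq> 0\<close>] fun_eq_iff
      xfield_apply curv_x_def curv_y_def)

lemma sec_S_xfield:
  assumes "a \<noteq> 0"
    and smooth: "smooth1 p\<^sub>1" "smooth1 q\<^sub>1" "smooth1 p\<^sub>2" "smooth1 q\<^sub>2"
    and periodic: "periodic1 p\<^sub>1" "periodic1 q\<^sub>1" "periodic1 p\<^sub>2" "periodic1 q\<^sub>2"
  shows "sec_S a (xfield p\<^sub>1 q\<^sub>1) (xfield p\<^sub>2 q\<^sub>2) =
    a * integral {0..1} (\<lambda>x. curv_x p\<^sub>1 q\<^sub>1 p\<^sub>2 q\<^sub>2 x * p\<^sub>1 x + curv_y p\<^sub>1 q\<^sub>1 p\<^sub>2 q\<^sub>2 x * q\<^sub>1 x)"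
proof -
  have "continuous_on UNIV (\<lambda>x. curv_x p\<^sub>1 q\<^sub>1 p\<^sub>2 q\<^sub>2 x * p\<^sub>1 x + curv_y p\<^sub>1 q\<^sub>1 p\<^sub>2 q\<^sub>2 x * q\<^sub>1 x)"
    using smooth by (intro smooth1_continuous_on) simp
  from integral_unit_square_fst[OF this] show ?thesis
    unfolding sec_S_def curv_xfield[OF assms] L2ip_def by (simp add: xfield_apply)
qed

lemma sec_S_density_x_fields:
  assumes "smooth1 f" "smooth1 g"
  shows "curv_x f (\<lambda>_. 0) g (\<lambda>_. 0) x * f x =
    (f x * deriv g x - g x * deriv f x)\<^sup>2
    + deriv (\<lambda>x. f x * f x * g x * deriv g x - f x * deriv f x * g x * g x) x"
  using assms by (simp add: curv_x_def component_defs power2_eq_square field_simps)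

lemma sec_S_x_fields:
  assumes "a > 0" "smooth f" "smooth g" "\<forall>x. f (x + 1) = f x" "\<forall>x. g (x + 1) = g x"
  shows "sec_S a (\<lambda>(x, y). (f x, 0)) (\<lambda>(x, y). (g x, 0)) =
      a * integral (cbox (0, 0) (1, 1)) (\<lambda>(x :: real, y :: real). (f x * deriv g x - g x * deriv f x)\<^sup>2)"
    and "sec_S a (\<lambda>(x, y). (f x, 0)) (\<lambda>(x, y). (g x, 0)) \<ge> 0"
proof -
  have f: "smooth1 f" "periodic1 f" and g: "smooth1 g" "periodic1 g"
    using assms by (simp_all add: smooth_imp_smooth1 periodic1_def)
  let ?T = "\<lambda>x. (f x * deriv g x - g x * deriv f x)\<^sup>2"
  have T: "smooth1 ?T"
    using f g by (simp add: power2_eq_square)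
  have "sec_S a (\<lambda>(x, y). (f x, 0)) (\<lambda>(x, y). (g x, 0)) = sec_S a (xfield f (\<lambda>_. 0)) (xfield g (\<lambda>_. 0))"
    by (simp add: xfield_def)
  also have "\<dots> = a * integral {0..1} (\<lambda>x. curv_x f (\<lambda>_. 0) g (\<lambda>_. 0) x * f x)"
    using assms(1) f g by (simp add: sec_S_xfield)
  also have "\<dots> = a * integral {0..1} ?T"
    using f g
    by (subst integral_add_deriv_periodic1[OF T _ _ sec_S_density_x_fields]) simp_all
  finally have S: "sec_S a (\<lambda>(x, y). (f x, 0)) (\<lambda>(x, y). (g x, 0)) = a * integral {0..1} ?T" .
  moreover have "integral (cbox (0, 0) (1, 1)) (\<lambda>(x :: real, y :: real). ?T x) = integral {0..1} ?T"
    using integral_unit_square_fst[OF smooth1_continuous_on[OF T]] by (simp add: case_prod_unfold)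
  ultimately show "sec_S a (\<lambda>(x, y). (f x, 0)) (\<lambda>(x, y). (g x, 0)) =
      a * integral (cbox (0, 0) (1, 1)) (\<lambda>(x :: real, y :: real). ?T x)"
    by simp
  have "0 \<le> integral {0..1} ?T"
    using T by (intro integral_nonneg integrable_continuous_interval smooth1_continuous_on) auto
  then show "sec_S a (\<lambda>(x, y). (f x, 0)) (\<lambda>(x, y). (g x, 0)) \<ge> 0"
    unfolding S using assms(1) by simp
qed

lemma sec_S_density_sine_example:
  assumes "smooth1 s"
  shows "curv_x s (\<lambda>_. 0) (\<lambda>_. 0) (\<lambda>x. s x * s x) x * s x =
    - 15/4 * (s x * s x * s x * s x * deriv s x * deriv s x)
    + deriv (\<lambda>x. 7/4 * (s x * s x * s x * s x * s x * deriv s x)) x"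
  using assms by (simp add: curv_x_def component_defs field_simps)

lemma sec_S_sine_example:
  assumes "a > 0"
  shows "sec_S a (\<lambda>(x, y). (sin (2 * pi * x), 0)) (\<lambda>(x, y). (0, (sin (2 * pi * x))\<^sup>2)) < 0"
proof -
  let ?s = "\<lambda>x. sin (2 * pi * x)"
  let ?K = "\<lambda>x. ?s x * ?s x * ?s x * ?s x * deriv ?s x * deriv ?s x"
  have s: "smooth1 ?s" "periodic1 ?s"
    by (rule smooth1_sin_2pi, rule periodic1_sin_2pi)
  have "sec_S a (\<lambda>(x, y). (?s x, 0)) (\<lambda>(x, y). (0, (?s x)\<^sup>2)) =
      sec_S a (xfield ?s (\<lambda>_. 0)) (xfield (\<lambda>_. 0) (\<lambda>x. ?s x * ?s x))"
    by (simp add: xfield_def power2_eq_square)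
  also have "\<dots> = a * integral {0..1} (\<lambda>x. curv_x ?s (\<lambda>_. 0) (\<lambda>_. 0) (\<lambda>x. ?s x * ?s x) x * ?s x)"
    using assms s by (simp add: sec_S_xfield)
  also have "\<dots> = a * integral {0..1} (\<lambda>x. - 15/4 * ?K x)"
    using s by (subst integral_add_deriv_periodic1[OF _ _ _ sec_S_density_sine_example]) simp_all
  also have "\<dots> = - 15/4 * a * integral {0..1} ?K"
    by simp
  finally have S: "sec_S a (\<lambda>(x, y). (?s x, 0)) (\<lambda>(x, y). (0, (?s x)\<^sup>2)) = - 15/4 * a * integral {0..1} ?K" .
  have "?K (1/8) \<noteq> 0"
    by (simp add: deriv_sin_2pi sin_45 cos_45)
  moreover have "smooth1 ?K"
    using s by simp
  moreover have "?K x \<ge> 0" for x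
  proof -
    have "?K x = (?s x * ?s x * deriv ?s x)\<^sup>2"
      by (simp add: power2_eq_square)
    then show ?thesis by simp
  qed
  ultimately have "integral {0..1} ?K > 0"
    by (intro integral_pos_if_continuous_nonneg[where c = "1/8"] smooth1_continuous_on) auto
  then show ?thesis
    unfolding S using assms by (simp add: mult_pos_pos)
qed

theorem proposition7p2:
  fixes a :: real
  assumes "a > 0"
  shows "(\<forall>f g :: real \<Rightarrow> real.
            smooth f \<and> smooth g \<and> (\<forall>x. f (x + 1) = f x) \<and> (\<forall>x. g (x + 1) = g x) \<longrightarrow>
            sec_S a (\<lambda>(x, y). (f x, 0)) (\<lambda>(x, y). (g x, 0))
              = a * integral (cbox (0,0) (1,1))
                  (\<lambda>(x::real, y::real). (f x * deriv g x - g x * deriv f x)\<^sup>2)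
            \<and> sec_S a (\<lambda>(x, y). (f x, 0)) (\<lambda>(x, y). (g x, 0)) \<ge> 0)
       \<and> sec_S a (\<lambda>(x, y). (sin (2 * pi * x), 0)) (\<lambda>(x, y). (0, (sin (2 * pi * x))\<^sup>2)) < 0"
  using sec_S_x_fields[OF assms] sec_S_sine_example[OF assms] by blast

end
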